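(* Let $d\ge3$, $a=d-1$, $n\ge2$, and write $q_k=1+a+\cdots+a^{k-1}$. Then the sandpile group of $T_n$ satisfies $$SP(T_n)\cong \bigoplus_{k=2}^{n-1}\mathbb{Z}_{q_k}^{\,a^{n-1-k}(a-1)}\ \oplus\ \mathbb{Z}_{q_n},$$ i.e. $SP(T_n)\cong\mathbb{Z}_{1+a}^{a^{n-3}(a-1)}\oplus\mathbb{Z}_{1+a+a^2}^{a^{n-4}(a-1)}\oplus\cdots\oplus\mathbb{Z}_{1+a+\cdots+a^{n-2}}^{a-1}\oplus\mathbb{Z}_{1+a+\cdots+a^{n-1}}$, where $\mathbb{Z}_p^q$ denotes the direct sum of $q$ copies of $\mathbb{Z}/p\mathbb{Z}$. For example, for $d=3$, $SP(T_n)\cong\mathbb{Z}_3^{2^{n-3}}\oplus\mathbb{Z}_7^{2^{n-4}}\oplus\cdots\oplus\mathbb{Z}_{2^{n-1}-1}\oplus\mathbb{Z}_{2^n-1}$.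
   Context: $T_n$: take the rooted tree in which every vertex at depth $0,\dots,n-2$ has exactly $d-1$ children (so the leaves are at depth $n-1$); identify all leaves into a single sink vertex $s$ (keeping multiple edges), and add one edge joining the root to $s$. Thus every non-sink vertex has degree $d$. Sandpile group of a finite graph $G$ with vertex set $V$ and sink $s$: $SP(G)=\mathbb{Z}^V/L$, where $L$ is the subgroup generated by the indicator vector of $s$ and the vectors $\Delta_x$ ($x\in V$), with $\Delta_x$ having entry equal to the number of edges between $x$ and $y$ at each $y\ne x$ and entry $-\deg(x)$ at $x$. *)

theory Defs
  imports "HOL-Algebra.Algebra"
begin

text \<open>A finite multigraph is given by a finite vertex set V and a symmetric
edge-multiplicity function em (em x y = number of edges between x and y).
The degree of x counts edges to other vertices (our graphs have no loops).\<close>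

definition mg_deg :: "'v set \<Rightarrow> ('v \<Rightarrow> 'v \<Rightarrow> nat) \<Rightarrow> 'v \<Rightarrow> nat" where
  "mg_deg V em x = (\<Sum>y\<in>V - {x}. em x y)"

definition ZV :: "'v set \<Rightarrow> ('v \<Rightarrow> int) monoid" where
  "ZV V = sum_group V (\<lambda>_. integer_group)"

definition laplace_vec :: "'v set \<Rightarrow> ('v \<Rightarrow> 'v \<Rightarrow> nat) \<Rightarrow> 'v \<Rightarrow> ('v \<Rightarrow> int)" where
  "laplace_vec V em x =
     (\<lambda>y. if y \<in> V then (if y = x then - int (mg_deg V em x) else int (em x y)) else undefined)"

definition indicator_vec :: "'v set \<Rightarrow> 'v \<Rightarrow> ('v \<Rightarrow> int)" where
  "indicator_vec V s = (\<lambda>y. if y \<in> V then (if y = s then 1 else 0) else undefined)"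

definition sandpile_lattice :: "'v set \<Rightarrow> ('v \<Rightarrow> 'v \<Rightarrow> nat) \<Rightarrow> 'v \<Rightarrow> ('v \<Rightarrow> int) set" where
  "sandpile_lattice V em s =
     generate (ZV V) (insert (indicator_vec V s) (laplace_vec V em ` V))"

definition sandpile_group where
  "sandpile_group V em s = ZV V Mod sandpile_lattice V em s"

text \<open>Non-sink vertices are Some w, where w is a word over {0..<a} (a = d-1) of
length at most n-2 (the vertex at depth length w; the root is Some []).
Children of Some w are Some (w @ [i]).  The leaves (depth n-1) are all
identified with the sink None; the extra root--sink edge is added.\<close>

definition T_vertices :: "nat \<Rightarrow> nat \<Rightarrow> nat list option set" where
  "T_vertices d n =
     insert None (Some ` {w. length w \<le> n - 2 \<and> (\<forall>i\<in>set w. i < d - 1)})"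

fun T_mult :: "nat \<Rightarrow> nat \<Rightarrow> nat list option \<Rightarrow> nat list option \<Rightarrow> nat" where
  "T_mult d n (Some u) (Some w) =
     (if (\<exists>i. w = u @ [i]) \<or> (\<exists>i. u = w @ [i]) then 1 else 0)"
| "T_mult d n (Some u) None =
     (if length u = n - 2 then d - 1 else 0) + (if u = [] then 1 else 0)"
| "T_mult d n None (Some w) =
     (if length w = n - 2 then d - 1 else 0) + (if w = [] then 1 else 0)"
| "T_mult d n None None = 0"

definition SP_T :: "nat \<Rightarrow> nat \<Rightarrow> (nat list option \<Rightarrow> int) set monoid" where
  "SP_T d n = sandpile_group (T_vertices d n) (T_mult d n) None"

definition qsum :: "nat \<Rightarrow> nat \<Rightarrow> nat" where
  "qsum a k = (\<Sum>i<k. a ^ i)"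

definition target_index :: "nat \<Rightarrow> nat \<Rightarrow> (nat \<times> nat) set" where
  "target_index a n =
     insert (n, 0) {(k, j). 2 \<le> k \<and> k \<le> n - 1 \<and> j < a ^ (n - 1 - k) * (a - 1)}"

definition target_group :: "nat \<Rightarrow> nat \<Rightarrow> (nat \<times> nat \<Rightarrow> int) monoid" where
  "target_group a n =
     sum_group (target_index a n) (\<lambda>(k, j). integer_mod_group (qsum a k))"

end

theory Submission
  imports Defs "HOL-Library.Sublist"
begin

(* Section 1 proves a general criterion for a lattice L in Z^V generated by a finite set:
   if vectors h_i span Z^V modulo L with q_i h_i in L, and integer functionals f_i are
   divisible by q_i on the generators of L and satisfy f_i(h_j) = [i = j] modulo q_i, then
   x |-> (f_i(x) mod q_i)_i maps Z^V onto the direct sum of the Z/q_i with kernel exactly L,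
   so Z^V / L is that direct sum by the first isomorphism theorem.

   The h's are
   e_root and the differences e_(v@[x]) - e_(v@[0]) of two children of a vertex v; torsion
   and spanning come from the radial relations q_(n-|w|) e_w = q_(n-|w|-1) e_parent(w)
   modulo L, proved from the leaves upwards with q_(m+2) = d q_(m+1) - a q_m.  The dual
   functionals weight a vertex u by q_(n-1-|u|) times a prefix pattern relative to v. *)

section \<open>Cyclic decompositions of quotients of integer vectors\<close>

text \<open>Vectors are handled as plain functions, and \<open>inL x\<close>
  means that the restriction of x to V lies in L.\<close>

locale int_lattice =
  fixes V :: "'v set" and gens :: "('v \<Rightarrow> int) set"
  assumes finite_V: "finite V" and gens_extensional: "gens \<subseteq> extensional V"
begin

abbreviation Z :: "('v \<Rightarrow> int) monoid" where "Z \<equiv> ZV V"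

lemma carrier_Z: "carrier Z = extensional V"
  using finite_V by (auto simp: ZV_def carrier_sum_group PiE_def intro: finite_subset)

lemma mult_Z: "x \<otimes>\<^bsub>Z\<^esub> y = (\<lambda>i\<in>V. x i + y i)"
  by (simp add: ZV_def)

lemma one_Z: "\<one>\<^bsub>Z\<^esub> = (\<lambda>i\<in>V. 0)"
  by (simp add: ZV_def)

lemma inv_Z: "x \<in> carrier Z \<Longrightarrow> inv\<^bsub>Z\<^esub> x = (\<lambda>i\<in>V. - x i)"
  unfolding ZV_def by (subst inv_sum_group) (auto simp: ZV_def)

lemma group_Z: "group Z"
  by (simp add: ZV_def)

definition L :: "('v \<Rightarrow> int) set" where
  "L = generate Z gens"

lemma subgroup_L: "subgroup L Z"
  unfolding L_def using gens_extensional
  by (intro group.generate_is_subgroup[OF group_Z]) (simp add: carrier_Z)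

definition inL :: "('v \<Rightarrow> int) \<Rightarrow> bool" where
  "inL x \<longleftrightarrow> restrict x V \<in> L"

lemma inL_cong: "inL x \<Longrightarrow> (\<And>y. y \<in> V \<Longrightarrow> x y = x' y) \<Longrightarrow> inL x'"
  unfolding inL_def by (metis restrict_ext)

lemma inL_iff_L: "x \<in> carrier Z \<Longrightarrow> inL x \<longleftrightarrow> x \<in> L"
  by (simp add: inL_def carrier_Z extensional_restrict)

lemma inL_zero: "inL (\<lambda>y. 0)"
  using subgroup.one_closed[OF subgroup_L] by (simp add: inL_def one_Z)

lemma inL_add: "inL x \<Longrightarrow> inL x' \<Longrightarrow> inL (\<lambda>y. x y + x' y)"
  using subgroup.m_closed[OF subgroup_L, of "restrict x V" "restrict x' V"]
  by (simp add: inL_def mult_Z restrict_def cong: if_cong)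

lemma inL_neg: "inL x \<Longrightarrow> inL (\<lambda>y. - x y)"
proof -
  assume "inL x"
  then have "inv\<^bsub>Z\<^esub> (restrict x V) \<in> L"
    unfolding inL_def by (rule subgroup.m_inv_closed[OF subgroup_L])
  moreover have "inv\<^bsub>Z\<^esub> (restrict x V) = restrict (\<lambda>y. - x y) V"
    by (subst inv_Z) (auto simp: carrier_Z)
  ultimately show ?thesis by (simp add: inL_def)
qed

lemma inL_diff: "inL x \<Longrightarrow> inL x' \<Longrightarrow> inL (\<lambda>y. x y - x' y)"
  using inL_add[OF _ inL_neg] by simp

lemma inL_smult: assumes "inL x" shows "inL (\<lambda>y. c * x y)"
proof -
  have nat_mult: "inL (\<lambda>y. int k * x y)" for k
    by (induction k) (use inL_zero inL_add[OF assms] in \<open>simp_all add: distrib_right\<close>)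
  show ?thesis
    using nat_mult[of "nat c"] inL_neg[OF nat_mult[of "nat (- c)"]] by (cases "c \<ge> 0") simp_all
qed

lemma inL_sum:
  "finite S \<Longrightarrow> (\<And>s. s \<in> S \<Longrightarrow> inL (x s)) \<Longrightarrow> inL (\<lambda>y. \<Sum>s\<in>S. x s y)"
  by (induction S rule: finite_induct) (auto intro: inL_zero inL_add)

lemma inL_gen: "g \<in> gens \<Longrightarrow> inL g"
  using gens_extensional generate.incl[of g gens Z]
  by (auto simp: inL_def L_def extensional_restrict)

definition e :: "'v \<Rightarrow> 'v \<Rightarrow> int" where
  "e u = (\<lambda>y. if y = u then 1 else 0)"

definition pair :: "('v \<Rightarrow> int) \<Rightarrow> ('v \<Rightarrow> int) \<Rightarrow> int" where
  "pair f x = (\<Sum>y\<in>V. f y * x y)"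

lemma pair_e: "u \<in> V \<Longrightarrow> pair f (e u) = f u"
  by (simp add: pair_def e_def if_distrib finite_V cong: if_cong)

lemma pair_cong: "(\<And>y. y \<in> V \<Longrightarrow> x y = x' y) \<Longrightarrow> pair f x = pair f x'"
  unfolding pair_def by (intro sum.cong) auto

lemma pair_restrict: "pair f (restrict x V) = pair f x"
  by (rule pair_cong) simp

lemma pair_diff: "pair f (\<lambda>y. x y - x' y) = pair f x - pair f x'"
  by (simp add: pair_def sum_subtractf right_diff_distrib)

lemma pair_add: "pair f (\<lambda>y. x y + x' y) = pair f x + pair f x'"
  by (simp add: pair_def sum.distrib distrib_left)

lemma pair_smult: "pair f (\<lambda>y. c * x y) = c * pair f x"
  by (simp add: pair_def sum_distrib_left algebra_simps)

lemma pair_mult: "pair f (x \<otimes>\<^bsub>Z\<^esub> x') = pair f x + pair f x'"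
  unfolding mult_Z pair_def by (simp add: sum.distrib distrib_left)

lemma pair_sum: "pair f (\<lambda>y. \<Sum>s\<in>S. x s y) = (\<Sum>s\<in>S. pair f (x s))"
  unfolding pair_def by (simp add: sum_distrib_left) (rule sum.swap)

lemma dvd_pair_L:
  assumes gens_dvd: "\<And>g. g \<in> gens \<Longrightarrow> k dvd pair f g" and x: "x \<in> L"
  shows "k dvd pair f x"
  using x unfolding L_def
proof (induction x rule: generate.induct)
  case one
  then show ?case by (simp add: one_Z pair_def)
next
  case (incl g)
  then show ?case by (rule gens_dvd)
next
  case (inv g)
  then have "pair f (inv\<^bsub>Z\<^esub> g) = - pair f g"
    using gens_extensional by (simp add: inv_Z carrier_Z pair_def sum_negf subset_iff)
  then show ?case using gens_dvd[OF inv] by simp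
next
  case (eng x x')
  then show ?case by (simp add: pair_mult)
qed

definition in_span :: "'i set \<Rightarrow> ('i \<Rightarrow> 'v \<Rightarrow> int) \<Rightarrow> ('v \<Rightarrow> int) \<Rightarrow> bool" where
  "in_span I h x \<longleftrightarrow> (\<exists>c. inL (\<lambda>y. x y - (\<Sum>i\<in>I. c i * h i y)))"

lemma in_span_inL: "inL x \<Longrightarrow> in_span I h x"
  unfolding in_span_def by (rule exI[of _ "\<lambda>_. 0"]) simp

lemma in_span_member:
  assumes "finite I" "i \<in> I" shows "in_span I h (h i)"
proof -
  have "(\<Sum>j\<in>I. (if j = i then 1 else 0) * h j y) = h i y" for y
    using assms by (simp add: if_distrib[of "\<lambda>c. c * _"] cong: if_cong)
  then show ?thesis
    unfolding in_span_def using inL_zero by (intro exI[of _ "\<lambda>j. if j = i then 1 else 0"]) simp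
qed

lemma in_span_add:
  assumes "in_span I h x" "in_span I h x'" shows "in_span I h (\<lambda>y. x y + x' y)"
proof -
  obtain c c' where "inL (\<lambda>y. x y - (\<Sum>i\<in>I. c i * h i y))" "inL (\<lambda>y. x' y - (\<Sum>i\<in>I. c' i * h i y))"
    using assms by (auto simp: in_span_def)
  from inL_add[OF this] have "inL (\<lambda>y. (x y + x' y) - (\<Sum>i\<in>I. (c i + c' i) * h i y))"
    by (simp add: algebra_simps sum.distrib)
  then show ?thesis unfolding in_span_def by (rule exI[of _ "\<lambda>i. c i + c' i"])
qed

lemma in_span_smult:
  assumes "in_span I h x" shows "in_span I h (\<lambda>y. k * x y)"
proof -
  obtain c where "inL (\<lambda>y. x y - (\<Sum>i\<in>I. c i * h i y))"
    using assms by (auto simp: in_span_def)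
  from inL_smult[OF this, of k] have "inL (\<lambda>y. k * x y - (\<Sum>i\<in>I. (k * c i) * h i y))"
    by (simp add: algebra_simps sum_distrib_left)
  then show ?thesis unfolding in_span_def by (rule exI[of _ "\<lambda>i. k * c i"])
qed

lemma in_span_diff:
  "in_span I h x \<Longrightarrow> in_span I h x' \<Longrightarrow> in_span I h (\<lambda>y. x y - x' y)"
  using in_span_add[OF _ in_span_smult[of I h x' "-1"]] by simp

lemma in_span_cong: "in_span I h x \<Longrightarrow> (\<And>y. y \<in> V \<Longrightarrow> x y = x' y) \<Longrightarrow> in_span I h x'"
  unfolding in_span_def by (metis (no_types, lifting) inL_cong)

lemma in_span_sum:
  "finite S \<Longrightarrow> (\<And>s. s \<in> S \<Longrightarrow> in_span I h (x s)) \<Longrightarrow> in_span I h (\<lambda>y. \<Sum>s\<in>S. x s y)"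
  by (induction S rule: finite_induct) (auto intro: in_span_inL inL_zero in_span_add)

lemma in_span_all:
  assumes "\<And>u. u \<in> V \<Longrightarrow> in_span I h (e u)" shows "in_span I h x"
proof -
  have "in_span I h (\<lambda>y. \<Sum>u\<in>V. x u * e u y)"
    by (intro in_span_sum finite_V in_span_smult assms)
  moreover have "(\<Sum>u\<in>V. x u * e u y) = x y" if "y \<in> V" for y
    using that finite_V by (simp add: e_def if_distrib cong: if_cong)
  ultimately show ?thesis by (rule in_span_cong) simp
qed

end

locale cyclic_decomposition = int_lattice V gens
  for V :: "'v set" and gens :: "('v \<Rightarrow> int) set" +
  fixes I :: "'i set" and q :: "'i \<Rightarrow> nat" and h f :: "'i \<Rightarrow> 'v \<Rightarrow> int"
  assumes finite_I: "finite I"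
    and q_pos: "\<And>i. i \<in> I \<Longrightarrow> 0 < q i"
    and torsion: "\<And>i. i \<in> I \<Longrightarrow> inL (\<lambda>y. int (q i) * h i y)"
    and spanning: "\<And>u. u \<in> V \<Longrightarrow> in_span I h (e u)"
    and gens_dvd: "\<And>i g. i \<in> I \<Longrightarrow> g \<in> gens \<Longrightarrow> int (q i) dvd pair (f i) g"
    and dual: "\<And>i j. i \<in> I \<Longrightarrow> j \<in> I \<Longrightarrow> int (q i) dvd pair (f i) (h j) - (if i = j then 1 else 0)"
begin

abbreviation G :: "('i \<Rightarrow> int) monoid" where
  "G \<equiv> sum_group I (\<lambda>i. integer_mod_group (q i))"

lemma carrier_G: "carrier G = {t \<in> extensional I. \<forall>i\<in>I. 0 \<le> t i \<and> t i < int (q i)}"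
  using finite_I q_pos
  by (auto simp: carrier_sum_group PiE_def Pi_def carrier_integer_mod_group intro: finite_subset)

definition Phi :: "('v \<Rightarrow> int) \<Rightarrow> 'i \<Rightarrow> int" where
  "Phi x = (\<lambda>i\<in>I. pair (f i) x mod int (q i))"

lemma Phi_hom: "Phi \<in> hom Z G"
proof (rule homI)
  show "Phi x \<in> carrier G" for x
    using q_pos by (simp add: carrier_G Phi_def)
  show "Phi (x \<otimes>\<^bsub>Z\<^esub> x') = Phi x \<otimes>\<^bsub>G\<^esub> Phi x'" for x x'
    by (simp add: Phi_def pair_mult mod_add_eq restrict_def fun_eq_iff)
qed

text \<open>By duality, the i-th functional reads off the i-th coefficient modulo \<open>q_i\<close>.\<close>

lemma pair_combination:
  assumes i: "i \<in> I"
  shows "int (q i) dvd pair (f i) (\<lambda>y. \<Sum>j\<in>I. c j * h j y) - c i"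
proof -
  have "(\<Sum>j\<in>I. c j * (if i = j then 1 else 0)) = (\<Sum>j\<in>I. if i = j then c j else 0)"
    by (rule sum.cong) auto
  also have "\<dots> = c i" using i finite_I by simp
  finally have delta: "(\<Sum>j\<in>I. c j * (if i = j then 1 else 0)) = c i" .
  have "pair (f i) (\<lambda>y. \<Sum>j\<in>I. c j * h j y) - c i
      = (\<Sum>j\<in>I. c j * (pair (f i) (h j) - (if i = j then 1 else 0)))"
    unfolding pair_sum pair_smult right_diff_distrib sum_subtractf delta ..
  also have "int (q i) dvd \<dots>"
    by (intro dvd_sum dvd_mult dual[OF i])
  finally show ?thesis .
qed

lemma Phi_onto: "Phi ` carrier Z = carrier G"
proof
  show "Phi ` carrier Z \<subseteq> carrier G"
    using Phi_hom by (auto simp: hom_def)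
  show "carrier G \<subseteq> Phi ` carrier Z"
  proof
    fix t assume t: "t \<in> carrier G"
    define x where "x = (\<lambda>y\<in>V. \<Sum>j\<in>I. t j * h j y)"
    have "Phi x i = t i" if i: "i \<in> I" for i
    proof -
      have "pair (f i) x = pair (f i) (\<lambda>y. \<Sum>j\<in>I. t j * h j y)"
        by (rule pair_cong) (simp add: x_def)
      then have "pair (f i) x mod int (q i) = t i mod int (q i)"
        using pair_combination[OF i, of t] by (simp add: mod_eq_dvd_iff)
      then show ?thesis using t i by (simp add: Phi_def carrier_G)
    qed
    then have "Phi x = t"
      using t by (intro extensionalityI[of _ I]) (auto simp: Phi_def carrier_G)
    moreover have "x \<in> carrier Z" by (simp add: x_def carrier_Z)
    ultimately show "t \<in> Phi ` carrier Z" by blast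
  qed
qed

lemma Phi_eq_one_iff: "Phi x = \<one>\<^bsub>G\<^esub> \<longleftrightarrow> (\<forall>i\<in>I. int (q i) dvd pair (f i) x)"
proof
  assume "Phi x = \<one>\<^bsub>G\<^esub>"
  then have "Phi x i = 0" if "i \<in> I" for i using that by simp
  then show "\<forall>i\<in>I. int (q i) dvd pair (f i) x" by (simp add: Phi_def dvd_eq_mod_eq_0)
next
  assume "\<forall>i\<in>I. int (q i) dvd pair (f i) x"
  then show "Phi x = \<one>\<^bsub>G\<^esub>" unfolding Phi_def one_sum_group by (intro restrict_ext) simp
qed

text \<open>Write it as a combination of the \<open>h j\<close> modulo L; duality forces every coefficient \<open>c_j\<close> to be
  a multiple of \<open>q_j\<close>, and \<open>q_j h_j \<in> L\<close>.\<close>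

lemma in_L_if_dvd:
  assumes x: "x \<in> carrier Z" and dvd: "\<And>i. i \<in> I \<Longrightarrow> int (q i) dvd pair (f i) x"
  shows "x \<in> L"
proof -
  obtain c where c: "inL (\<lambda>y. x y - (\<Sum>j\<in>I. c j * h j y))"
    using in_span_all[OF spanning] unfolding in_span_def by blast
  let ?comb = "\<lambda>y. \<Sum>j\<in>I. c j * h j y"
  have c_dvd: "int (q i) dvd c i" if i: "i \<in> I" for i
  proof -
    have "int (q i) dvd pair (f i) (restrict (\<lambda>y. x y - ?comb y) V)"
      by (rule dvd_pair_L[OF gens_dvd[OF i] c[unfolded inL_def]])
    then have "int (q i) dvd pair (f i) x - pair (f i) ?comb"
      unfolding pair_restrict pair_diff .
    from dvd_diff[OF dvd[OF i] this] have "int (q i) dvd pair (f i) ?comb"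
      by simp
    from dvd_diff[OF this pair_combination[OF i, of c]] show ?thesis
      by simp
  qed
  have "inL (\<lambda>y. c j * h j y)" if j: "j \<in> I" for j
  proof -
    have "c j div int (q j) * int (q j) = c j" using c_dvd[OF j] by simp
    then show ?thesis
      using inL_smult[OF torsion[OF j], of "c j div int (q j)"] by (simp add: mult.assoc[symmetric])
  qed
  then have "inL ?comb"
    by (intro inL_sum finite_I)
  then have "inL (\<lambda>y. (x y - ?comb y) + ?comb y)"
    by (rule inL_add[OF c])
  then show "x \<in> L"
    using inL_iff_L[OF x] by simp
qed

lemma kernel_Phi: "kernel Z G Phi = L"
proof -
  have "kernel Z G Phi = {x \<in> carrier Z. \<forall>i\<in>I. int (q i) dvd pair (f i) x}"
    using Phi_eq_one_iff by (simp add: kernel_def)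
  moreover have "x \<in> carrier Z" "\<forall>i\<in>I. int (q i) dvd pair (f i) x" if "x \<in> L" for x
    using that subgroup.subset[OF subgroup_L] gens_dvd dvd_pair_L by blast+
  ultimately show ?thesis using in_L_if_dvd by blast
qed

theorem quotient_iso: "Z Mod L \<cong> G"
proof -
  interpret group_hom Z G Phi
    using Phi_hom group_Z by (simp add: group_hom_def group_hom_axioms_def)
  show ?thesis using FactGroup_iso[OF Phi_onto] by (simp add: kernel_Phi)
qed

end

section \<open>Base-b digit expansions\<close>

fun digs :: "nat \<Rightarrow> nat \<Rightarrow> nat \<Rightarrow> nat list" where
  "digs b 0 m = []"
| "digs b (Suc l) m = (m mod b) # digs b l (m div b)"

fun enc :: "nat \<Rightarrow> nat list \<Rightarrow> nat" where
  "enc b [] = 0"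
| "enc b (x # xs) = x + b * enc b xs"

lemma length_digs [simp]: "length (digs b l m) = l"
  by (induction l arbitrary: m) auto

lemma set_digs: "0 < b \<Longrightarrow> i \<in> set (digs b l m) \<Longrightarrow> i < b"
  by (induction l arbitrary: m) auto

lemma digs_enc: "\<forall>i\<in>set w. i < b \<Longrightarrow> digs b (length w) (enc b w) = w"
  by (induction w) auto

lemma enc_digs: "m < b ^ l \<Longrightarrow> enc b (digs b l m) = m"
proof (induction l arbitrary: m)
  case 0 then show ?case by simp
next
  case (Suc l)
  then have "m div b < b ^ l"
    by (metis less_mult_imp_div_less mult.commute power_Suc)
  with Suc.IH show ?case by simp
qed

lemma enc_less: "\<forall>i\<in>set w. i < b \<Longrightarrow> enc b w < b ^ length w"
proof (induction w)
  case Nil then show ?case by simp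
next
  case (Cons x w)
  then have "b * (enc b w + 1) \<le> b * b ^ length w" by (intro mult_le_mono2) simp
  moreover have "x < b" using Cons.prems by simp
  ultimately show ?case by (simp add: algebra_simps)
qed

section \<open>The sandpile group of \<open>T_n\<close>\<close>

locale tree =
  fixes d n :: nat
  assumes d3: "3 \<le> d" and n2: "2 \<le> n"
begin

abbreviation a :: nat where "a \<equiv> d - 1"
abbreviation V :: "nat list option set" where "V \<equiv> T_vertices d n"
abbreviation em :: "nat list option \<Rightarrow> nat list option \<Rightarrow> nat" where "em \<equiv> T_mult d n"

lemma a2: "2 \<le> a" using d3 by simp

lemma int_a: "int a = int d - 1" "int (d - Suc 0) = int d - 1" using d3 by simp_all

definition W :: "nat list set" where
  "W = {w. length w \<le> n - 2 \<and> (\<forall>i\<in>set w. i < a)}"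

lemma V_eq: "V = insert None (Some ` W)"
  by (simp add: T_vertices_def W_def)

lemma None_in_V: "None \<in> V"
  by (simp add: V_eq)

lemma finite_vertices: "finite V"
proof -
  have "W = {w. set w \<subseteq> {..<a} \<and> length w \<le> n - 2}" by (auto simp: W_def)
  then show ?thesis using finite_lists_length_le[of "{..<a}" "n - 2"] by (simp add: V_eq)
qed

definition gens :: "(nat list option \<Rightarrow> int) set" where
  "gens = insert (indicator_vec V None) (laplace_vec V em ` V)"

sublocale int_lattice V gens
  by unfold_locales
    (auto simp: finite_vertices gens_def indicator_vec_def laplace_vec_def extensional_def)

lemma sandpile_lattice_eq: "sandpile_lattice V em None = L"
  by (unfold L_def) (simp add: sandpile_lattice_def gens_def)

text \<open>The parent of a non-sink vertex; the parent of the root is the sink, via the extra edge.\<close>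

definition par :: "nat list \<Rightarrow> nat list option" where
  "par w = (if w = [] then None else Some (butlast w))"

lemma par_in_V: "w \<in> W \<Longrightarrow> par w \<in> V"
  by (auto simp: par_def V_eq W_def in_set_butlastD intro!: imageI)

lemma child_in_W: "w \<in> W \<Longrightarrow> length w < n - 2 \<Longrightarrow> x < a \<Longrightarrow> w @ [x] \<in> W"
  by (auto simp: W_def)

text \<open>The row of the adjacency matrix at a non-sink vertex \<open>Some w\<close>: its parent, its
  \<open>a\<close> children, or (at depth \<open>n - 2\<close>) \<open>a\<close> edges to the sink.\<close>

definition adj :: "nat list \<Rightarrow> nat list option \<Rightarrow> int" where
  "adj w y = e (par w) y + (if length w < n - 2 then (\<Sum>x<a. e (Some (w @ [x])) y) else 0)
         + (if length w = n - 2 then int a * e None y else 0)"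

lemma sum_children_e:
  "(\<Sum>x<a. e (Some (w @ [x])) (Some u)) = (if \<exists>x<a. u = w @ [x] then 1 else 0)"
proof (cases "\<exists>x<a. u = w @ [x]")
  case True
  then obtain x0 where x0: "x0 < a" "u = w @ [x0]" by blast
  have "(\<Sum>x<a. e (Some (w @ [x])) (Some u)) = (\<Sum>x<a. if x = x0 then 1 else 0)"
    by (rule sum.cong) (auto simp: e_def x0)
  then show ?thesis using True x0 by simp
next
  case False
  then show ?thesis by (auto simp: e_def intro!: sum.neutral)
qed

lemma em_adj:
  assumes w: "w \<in> W" and y: "y \<in> V"
  shows "int (em (Some w) y) = adj w y"
proof (cases y)
  case None
  then show ?thesis by (auto simp: adj_def e_def par_def)
next
  case (Some u)
  with y have u: "u \<in> W" by (auto simp: V_eq)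
  have "(\<exists>i. w = u @ [i]) \<longleftrightarrow> (w \<noteq> [] \<and> u = butlast w)"
    by (metis append_butlast_last_id butlast_snoc snoc_eq_iff_butlast)
  moreover have "(\<exists>i. u = w @ [i]) \<longleftrightarrow> (length w < n - 2 \<and> (\<exists>x<a. u = w @ [x]))"
    using u by (auto simp: W_def)
  moreover have "\<not> ((\<exists>i. u = w @ [i]) \<and> (\<exists>i. w = u @ [i]))" by auto
  ultimately show ?thesis
    by (auto simp: Some adj_def par_def sum_children_e e_def)
qed

lemma adj_self: "adj w (Some w) = 0"
proof -
  have "par w \<noteq> Some w"
    by (auto simp: par_def) (metis append_butlast_last_id append_self_conv list.distinct(1))
  then show ?thesis by (auto simp: adj_def e_def intro!: sum.neutral)
qed

lemma pair_adj:
  assumes w: "w \<in> W"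
  shows "pair g (adj w) = g (par w) + (if length w < n - 2 then (\<Sum>x<a. g (Some (w @ [x]))) else 0)
         + (if length w = n - 2 then int a * g None else 0)"
proof (cases "length w < n - 2")
  case True
  have "adj w = (\<lambda>y. e (par w) y + (\<Sum>x<a. e (Some (w @ [x])) y))"
    using True by (simp add: adj_def fun_eq_iff)
  moreover have "pair g (e (Some (w @ [x]))) = g (Some (w @ [x]))" if "x < a" for x
    using child_in_W[OF w True that] by (intro pair_e) (simp add: V_eq)
  ultimately show ?thesis
    using True by (simp add: pair_add pair_sum pair_e[OF par_in_V[OF w]])
next
  case False
  then have "length w = n - 2" using w by (simp add: W_def)
  then have "adj w = (\<lambda>y. e (par w) y + int a * e None y)"
    by (simp add: adj_def fun_eq_iff)
  then show ?thesis
    using False \<open>length w = n - 2\<close> pair_e[OF None_in_V]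
    by (simp add: pair_add pair_smult pair_e[OF par_in_V[OF w]])
qed

lemma degree: assumes w: "w \<in> W" shows "int (mg_deg V em (Some w)) = int d"
proof -
  have "int (mg_deg V em (Some w)) = (\<Sum>y\<in>V - {Some w}. adj w y)"
    unfolding mg_deg_def by (simp add: em_adj[OF w])
  also have "\<dots> = (\<Sum>y\<in>V. adj w y)"
    using adj_self[of w] finite_vertices by (intro sum.mono_neutral_left) auto
  also have "\<dots> = pair (\<lambda>_. 1) (adj w)" by (simp add: pair_def)
  also have "\<dots> = int d" unfolding pair_adj[OF w] using d3 w by (auto simp: W_def)
  finally show ?thesis .
qed

lemma laplace_Some:
  assumes w: "w \<in> W" and y: "y \<in> V"
  shows "laplace_vec V em (Some w) y = adj w y - int d * e (Some w) y"
  using y em_adj[OF w y] degree[OF w] adj_self[of w] by (auto simp: laplace_vec_def e_def)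

text \<open>The Laplacian rows sum to zero, so \<open>\<Delta>_None\<close> is minus the sum of the other rows.\<close>

lemma em_sym: "em x y = em y x"
  by (cases x; cases y) auto

lemma laplace_column_sum: assumes y: "y \<in> V" shows "(\<Sum>x\<in>V. laplace_vec V em x y) = 0"
proof -
  have "(\<Sum>x\<in>V. laplace_vec V em x y)
      = laplace_vec V em y y + (\<Sum>x\<in>V - {y}. laplace_vec V em x y)"
    using y finite_vertices by (simp add: sum.remove)
  also have "(\<Sum>x\<in>V - {y}. laplace_vec V em x y) = (\<Sum>x\<in>V - {y}. int (em y x))"
    using y by (intro sum.cong) (auto simp: laplace_vec_def em_sym)
  also have "\<dots> = int (mg_deg V em y)" by (simp add: mg_deg_def)
  finally show ?thesis using y by (simp add: laplace_vec_def)
qed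

lemma laplace_None: assumes y: "y \<in> V"
  shows "laplace_vec V em None y = - (\<Sum>x\<in>Some ` W. laplace_vec V em x y)"
proof -
  have "finite W" using finite_vertices by (simp add: V_eq finite_image_iff)
  then have "(\<Sum>x\<in>V. laplace_vec V em x y)
      = laplace_vec V em None y + (\<Sum>x\<in>Some ` W. laplace_vec V em x y)"
    unfolding V_eq by (subst sum.insert) auto
  then show ?thesis using laplace_column_sum[OF y] by simp
qed

lemma inL_e_None: "inL (e None)"
proof -
  have "inL (indicator_vec V None)" by (rule inL_gen) (simp add: gens_def)
  then show ?thesis by (rule inL_cong) (simp add: indicator_vec_def e_def)
qed

lemma inL_laplace: assumes w: "w \<in> W" shows "inL (\<lambda>y. adj w y - int d * e (Some w) y)"
proof -
  have "inL (laplace_vec V em (Some w))" by (rule inL_gen) (use w in \<open>auto simp: gens_def V_eq\<close>)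
  then show ?thesis by (rule inL_cong) (simp add: laplace_Some[OF w])
qed

definition Q :: "nat \<Rightarrow> int" where
  "Q m = int (qsum a m)"

lemma Q_0 [simp]: "Q 0 = 0"
  by (simp add: Q_def qsum_def)

lemma Q_Suc: "Q (Suc m) = 1 + int a * Q m"
  unfolding Q_def qsum_def by (subst sum.lessThan_Suc_shift) (simp add: sum_distrib_left)

lemma Q_rec: "Q (Suc (Suc m)) = int d * Q (Suc m) - int a * Q m"
  using d3 by (simp add: Q_Suc algebra_simps of_nat_diff)

lemma Q_pos: "0 < m \<Longrightarrow> 0 < Q m"
proof -
  assume "0 < m"
  then obtain k where "m = Suc k" using gr0_conv_Suc by blast
  moreover have "0 \<le> Q k" by (simp add: Q_def)
  ultimately show ?thesis by (simp add: Q_Suc add_pos_nonneg)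
qed

lemma Q_1 [simp]: "Q (Suc 0) = 1" and Q_2 [simp]: "Q 2 = int d"
  using d3 by (simp_all add: Q_Suc numeral_2_eq_2)

text \<open>The radial relations: \<open>Q(n - |w|) e_w - Q(n - |w| - 1) e_par(w) \<in> L\<close>, by induction from
  the leaves upwards, using \<open>\<Delta>_w\<close> and the relations for the children of \<open>w\<close>.\<close>

lemma radial:
  assumes "w \<in> W"
  shows "inL (\<lambda>y. Q (n - length w) * e (Some w) y - Q (n - Suc (length w)) * e (par w) y)"
  using assms
proof (induction "n - 2 - length w" arbitrary: w)
  case 0
  then have lw: "length w = n - 2" by (auto simp: W_def)
  then have "n - length w = Suc (Suc 0)" "n - Suc (length w) = Suc 0" using n2 by auto
  moreover have "inL (\<lambda>y. - (adj w y - int d * e (Some w) y) + int a * e None y)"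
    by (rule inL_add[OF inL_neg[OF inL_laplace[OF 0(2)]] inL_smult[OF inL_e_None]])
  ultimately show ?case
    using lw by (simp add: adj_def Q_rec)
next
  case (Suc t)
  then have lw: "length w < n - 2" by auto
  define m where "m = n - 2 - length w"
  have m: "n - length w = Suc (Suc m)" "n - Suc (length w) = Suc m"
    using lw n2 by (auto simp: m_def)
  have child: "inL (\<lambda>y. Q (Suc m) * e (Some (w @ [x])) y - Q m * e (Some w) y)" if x: "x < a" for x
  proof -
    have "n - length (w @ [x]) = Suc m" "n - Suc (length (w @ [x])) = m" using m by auto
    then show ?thesis
      using Suc(1)[of "w @ [x]"] Suc(2) child_in_W[OF Suc(3) lw x] by (simp add: par_def)
  qed
  have "inL (\<lambda>y. (\<Sum>x<a. Q (Suc m) * e (Some (w @ [x])) y - Q m * e (Some w) y)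
               - Q (Suc m) * (adj w y - int d * e (Some w) y))"
    by (intro inL_diff inL_sum inL_smult inL_laplace Suc(3) child) simp_all
  moreover have "(\<Sum>x<a. Q (Suc m) * e (Some (w @ [x])) y - Q m * e (Some w) y)
               - Q (Suc m) * (adj w y - int d * e (Some w) y)
            = Q (Suc (Suc m)) * e (Some w) y - Q (Suc m) * e (par w) y" for y
    unfolding Q_rec adj_def
    using lw by (simp add: sum_subtractf sum_distrib_left algebra_simps)
  ultimately show ?case
    unfolding m by simp
qed

text \<open>Besides the root index \<open>(n, 0)\<close>, an index \<open>(k, j)\<close>
  encodes a vertex \<open>node (k, j)\<close> at depth \<open>n - 1 - k\<close> (by the base-a digits of \<open>j div (a-1)\<close>)
  together with a child label \<open>label (k, j) \<in> {1..<a}\<close>; this is a bijection onto such pairs.\<close>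

abbreviation I :: "(nat \<times> nat) set" where
  "I \<equiv> target_index a n"

lemma finite_I: "finite I"
proof -
  have "{(k, j). 2 \<le> k \<and> k \<le> n - 1 \<and> j < a ^ (n - 1 - k) * (a - 1)}
      = Sigma {2..n - 1} (\<lambda>k. {..<a ^ (n - 1 - k) * (a - 1)})"
    by auto
  then show ?thesis by (simp add: target_index_def)
qed

lemma root_index: "i \<in> I \<Longrightarrow> fst i = n \<Longrightarrow> i = (n, 0)"
  using n2 by (auto simp: target_index_def)

lemma index_fst_pos: "i \<in> I \<Longrightarrow> 0 < fst i"
  using n2 by (auto simp: target_index_def)

lemma index_nonroot:
  assumes "i \<in> I" "fst i \<noteq> n"
  shows "2 \<le> fst i" "fst i \<le> n - 1" "snd i < a ^ (n - 1 - fst i) * (a - 1)"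
  using assms by (auto simp: target_index_def)

definition node :: "nat \<times> nat \<Rightarrow> nat list" where
  "node i = digs a (n - 1 - fst i) (snd i div (a - 1))"

definition label :: "nat \<times> nat \<Rightarrow> nat" where
  "label i = Suc (snd i mod (a - 1))"

lemma node_label:
  assumes i: "i \<in> I" "fst i \<noteq> n"
  shows "length (node i) = n - 1 - fst i" "length (node i) < n - 2" "node i \<in> W"
    "1 \<le> label i" "label i < a" "snd i div (a - 1) < a ^ (n - 1 - fst i)"
proof -
  note ix = index_nonroot[OF i]
  show l: "length (node i) = n - 1 - fst i" by (simp add: node_def)
  show "length (node i) < n - 2" using l ix by auto
  then show "node i \<in> W" using a2 by (auto simp: W_def node_def dest: set_digs[rotated])
  show "1 \<le> label i" by (simp add: label_def)
  have "snd i mod (a - 1) < a - 1" using a2 by (intro mod_less_divisor) simp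
  then show "label i < a" unfolding label_def by linarith
  show "snd i div (a - 1) < a ^ (n - 1 - fst i)"
    using ix(3) a2 by (simp add: less_mult_imp_div_less)
qed

lemma node_label_inj:
  assumes i: "i \<in> I" "fst i \<noteq> n" and i': "i' \<in> I" "fst i' \<noteq> n"
    and eq: "node i = node i'" "label i = label i'"
  shows "i = i'"
proof -
  have "n - 1 - fst i = n - 1 - fst i'"
    using node_label(1)[OF i] node_label(1)[OF i'] eq by simp
  then have "fst i = fst i'"
    using index_nonroot[OF i] index_nonroot[OF i'] by linarith
  moreover have "snd i div (a - 1) = snd i' div (a - 1)"
    using enc_digs[OF node_label(6)[OF i]] enc_digs[OF node_label(6)[OF i']] eq
    by (simp add: node_def)
  moreover have "snd i mod (a - 1) = snd i' mod (a - 1)" using eq by (simp add: label_def)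
  ultimately show ?thesis by (metis div_mult_mod_eq prod_eq_iff)
qed

lemma node_label_surj:
  assumes v: "v \<in> W" "length v < n - 2" and x: "1 \<le> x" "x < a"
  shows "\<exists>i\<in>I. fst i \<noteq> n \<and> node i = v \<and> label i = x"
proof -
  define k where "k = n - 1 - length v"
  define j where "j = enc a v * (a - 1) + (x - 1)"
  have vs: "\<forall>i\<in>set v. i < a" using v by (auto simp: W_def)
  have lk: "length v = n - 1 - k" using v by (auto simp: k_def)
  have "j < (enc a v + 1) * (a - 1)" using x unfolding j_def by simp
  also have "\<dots> \<le> a ^ (n - 1 - k) * (a - 1)"
    using enc_less[OF vs] lk by (intro mult_le_mono1) auto
  finally have "(k, j) \<in> I" "k \<noteq> n" using v n2 by (auto simp: target_index_def k_def)
  moreover have "x - 1 < a - 1" using x by linarith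
  then have "j div (a - 1) = enc a v" "j mod (a - 1) = x - 1"
    unfolding j_def by simp_all
  ultimately show ?thesis using x lk digs_enc[OF vs]
    by (intro bexI[of _ "(k, j)"]) (auto simp: node_def label_def)
qed

definition h :: "nat \<times> nat \<Rightarrow> nat list option \<Rightarrow> int" where
  "h i = (if fst i = n then e (Some [])
          else (\<lambda>y. e (Some (node i @ [label i])) y - e (Some (node i @ [0])) y))"

lemma torsion: assumes i: "i \<in> I" shows "inL (\<lambda>y. Q (fst i) * h i y)"
proof (cases "fst i = n")
  case True
  have "inL (\<lambda>y. (Q (n - length ([]::nat list)) * e (Some []) y
                   - Q (n - Suc (length ([]::nat list))) * e (par []) y) + Q (n - 1) * e None y)"
    by (intro inL_add radial inL_smult inL_e_None) (simp add: W_def)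
  then show ?thesis using True by (simp add: h_def par_def)
next
  case nonroot: False
  note nl = node_label[OF i nonroot]
  have children: "node i @ [label i] \<in> W" "node i @ [0] \<in> W"
    using child_in_W[OF nl(3) nl(2)] nl(5) a2 by auto
  have depth: "n - length (node i @ [x]) = fst i" for x
    using nl(1) index_nonroot[OF i nonroot] by simp
  have "inL (\<lambda>y. (Q (n - length (node i @ [label i])) * e (Some (node i @ [label i])) y
                   - Q (n - Suc (length (node i @ [label i]))) * e (par (node i @ [label i])) y)
                - (Q (n - length (node i @ [0])) * e (Some (node i @ [0])) y
                   - Q (n - Suc (length (node i @ [0]))) * e (par (node i @ [0])) y))"
    by (intro inL_diff radial children)
  then show ?thesis using nonroot unfolding depth by (simp add: h_def par_def algebra_simps)
qed

abbreviation spanned :: "(nat list option \<Rightarrow> int) \<Rightarrow> bool" where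
  "spanned \<equiv> in_span I h"

text \<open>If \<open>e_w\<close> and \<open>e_par(w)\<close> are spanned, so is \<open>a e_(w@[0])\<close>: the Laplacian row gives the sum
  of the children, and the \<open>h\<close>-generators at \<open>w\<close> give the differences of children.\<close>

lemma spanned_first_child_multiple:
  assumes w: "w \<in> W" and lw: "length w < n - 2"
    and span_w: "spanned (e (Some w))" and span_par: "spanned (e (par w))"
  shows "spanned (\<lambda>y. int a * e (Some (w @ [0])) y)"
proof -
  let ?c = "\<lambda>x. e (Some (w @ [x]))"
  have "spanned (\<lambda>y. ((adj w y - int d * e (Some w) y) - e (par w) y) + int d * e (Some w) y)"
    by (intro in_span_add in_span_diff in_span_smult in_span_inL inL_laplace w span_par span_w)
  then have sum: "spanned (\<lambda>y. \<Sum>x<a. ?c x y)"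
    by (rule in_span_cong) (use lw in \<open>simp add: adj_def\<close>)
  have diff: "spanned (\<lambda>y. ?c x y - ?c 0 y)" if x: "x \<in> {1..<a}" for x
  proof -
    obtain i where i: "i \<in> I" "fst i \<noteq> n" "node i = w" "label i = x"
      using node_label_surj[OF w lw, of x] x by auto
    have "spanned (h i)" by (rule in_span_member[OF finite_I i(1)])
    then show ?thesis by (rule in_span_cong) (simp add: h_def i)
  qed
  have "spanned (\<lambda>y. (\<Sum>x<a. ?c x y) - (\<Sum>x\<in>{1..<a}. ?c x y - ?c 0 y))"
    by (intro in_span_diff sum in_span_sum diff) simp
  moreover have "(\<Sum>x<a. ?c x y) - (\<Sum>x\<in>{1..<a}. ?c x y - ?c 0 y) = int a * ?c 0 y" for y
  proof -
    have "{..<a} = insert 0 {1..<a}" using a2 by auto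
    then have "(\<Sum>x<a. ?c x y) = ?c 0 y + (\<Sum>x\<in>{1..<a}. ?c x y)" by simp
    then show ?thesis using a2 by (simp add: sum_subtractf of_nat_diff algebra_simps)
  qed
  ultimately show ?thesis by (rule in_span_cong)
qed

text \<open>Going down one level: with \<open>e_w\<close> and \<open>e_par(w)\<close>, all children of w are spanned,
  using the radial relation at \<open>w@[0]\<close> and \<open>Q(r+1) = 1 + a Q(r)\<close>.\<close>

lemma spanned_child:
  assumes w: "w \<in> W" and lw: "length w < n - 2" and x: "x < a"
    and span_w: "spanned (e (Some w))" and span_par: "spanned (e (par w))"
  shows "spanned (e (Some (w @ [x])))"
proof -
  let ?c = "\<lambda>x. e (Some (w @ [x]))"
  define r where "r = n - Suc (length (w @ [0]))"
  have "n - length (w @ [0]) = Suc r" using lw by (simp add: r_def)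
  then have "inL (\<lambda>y. Q (Suc r) * ?c 0 y - Q r * e (Some w) y)"
    using radial[OF child_in_W[OF w lw, of 0]] a2 by (simp add: par_def r_def)
  then have "spanned (\<lambda>y. (Q (Suc r) * ?c 0 y - Q r * e (Some w) y) + Q r * e (Some w) y
                           - Q r * (int a * ?c 0 y))"
    by (intro in_span_diff in_span_add in_span_smult in_span_inL span_w
        spanned_first_child_multiple[OF w lw span_w span_par])
  then have first: "spanned (?c 0)"
    by (rule in_span_cong) (simp add: Q_Suc algebra_simps)
  show ?thesis
  proof (cases "x = 0")
    case True
    then show ?thesis using first by simp
  next
    case False
    obtain i where i: "i \<in> I" "fst i \<noteq> n" "node i = w" "label i = x"
      using node_label_surj[OF w lw] False x by (metis less_one not_le)
    have "spanned (\<lambda>y. h i y + ?c 0 y)"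
      by (rule in_span_add[OF in_span_member[OF finite_I i(1)] first])
    then show ?thesis by (rule in_span_cong) (simp add: h_def i)
  qed
qed

lemma spanning: assumes u: "u \<in> V" shows "spanned (e u)"
proof (cases u)
  case None
  then show ?thesis using in_span_inL[OF inL_e_None] by simp
next
  case (Some w)
  with u have "w \<in> W" by (auto simp: V_eq)
  then show ?thesis unfolding Some
  proof (induction "length w" arbitrary: w rule: less_induct)
    case less
    show ?case
    proof (cases w rule: rev_cases)
      case Nil
      have "(n, 0) \<in> I" by (simp add: target_index_def)
      from in_span_member[OF finite_I this] show ?thesis
        by (rule in_span_cong) (simp add: h_def Nil)
    next
      case (snoc v x)
      with less.prems have v: "v \<in> W" "length v < n - 2" "x < a" by (auto simp: W_def)
      have "spanned (e (par v))"
      proof (cases "v = []")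
        case True
        then show ?thesis using in_span_inL[OF inL_e_None] by (simp add: par_def)
      next
        case False
        have "butlast v \<in> W" using v by (auto simp: W_def dest: in_set_butlastD)
        then show ?thesis using less.hyps[of "butlast v"] False snoc by (simp add: par_def)
      qed
      then show ?thesis
        using spanned_child[OF v] less.hyps[of v] v snoc by simp
    qed
  qed
qed

definition beta :: "nat \<times> nat \<Rightarrow> nat list \<Rightarrow> int" where
  "beta i u = (if strict_prefix (node i) u then 1 else 0)
              - int a * (if prefix (node i @ [label i]) u then 1 else 0)"

definition coef :: "nat \<times> nat \<Rightarrow> nat list \<Rightarrow> int" where
  "coef i u = (if fst i = n then - int a else beta i u)"

definition phi :: "nat \<times> nat \<Rightarrow> nat list option \<Rightarrow> int" where
  "phi i y = (case y of None \<Rightarrow> 0 | Some u \<Rightarrow> coef i u * Q (n - 1 - length u))"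

lemma pair_laplace:
  assumes w: "w \<in> W"
  defines "m \<equiv> n - 2 - length w"
  shows "pair (phi i) (\<lambda>y. adj w y - int d * e (Some w) y)
       = (if w = [] then 0 else coef i (butlast w) * Q (Suc (Suc m)))
         + (\<Sum>x<a. coef i (w @ [x])) * Q m - int d * coef i w * Q (Suc m)"
proof -
  have lw: "length w \<le> n - 2" using w by (simp add: W_def)
  have depth: "n - Suc (length w) = Suc m" "n - Suc (Suc (length w)) = m"
    using lw n2 by (auto simp: m_def)
  have depth_par: "n - 1 - length (butlast w) = Suc (Suc m)" if "w \<noteq> []"
    using lw n2 that by (cases w rule: rev_cases) (auto simp: m_def)
  have par: "phi i (par w) = (if w = [] then 0 else coef i (butlast w) * Q (Suc (Suc m)))"
    using depth_par by (simp add: phi_def par_def)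
  have children: "(if length w < n - 2 then \<Sum>x<a. phi i (Some (w @ [x])) else 0)
      = (\<Sum>x<a. coef i (w @ [x])) * Q m"
  proof (cases "length w < n - 2")
    case True
    then show ?thesis by (simp add: phi_def depth sum_distrib_right)
  next
    case False
    then have "m = 0" using lw by (simp add: m_def)
    with False show ?thesis by simp
  qed
  have "Some w \<in> V" using w by (simp add: V_eq)
  then have "pair (phi i) (\<lambda>y. adj w y - int d * e (Some w) y)
      = phi i (par w) + (if length w < n - 2 then \<Sum>x<a. phi i (Some (w @ [x])) else 0)
        - int d * (coef i w * Q (Suc m))"
    by (simp add: pair_diff pair_smult pair_adj[OF w] pair_e phi_def depth)
  then show ?thesis
    unfolding par children by simp
qed

lemma beta_snoc: "beta i (w @ [x]) = (if prefix (node i) w then 1 else 0)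
     - int a * (if (node i = w \<and> label i = x) \<or> prefix (node i @ [label i]) w then 1 else 0)"
proof -
  have "strict_prefix (node i) (w @ [x]) \<longleftrightarrow> prefix (node i) w"
    by (auto simp: strict_prefix_def dest: prefix_length_le)
  moreover have "prefix (node i @ [label i]) (w @ [x])
      \<longleftrightarrow> (node i = w \<and> label i = x) \<or> prefix (node i @ [label i]) w"
    by auto
  ultimately show ?thesis by (simp add: beta_def)
qed

lemma beta_not_prefix: "\<not> prefix (node i) w \<Longrightarrow> beta i w = 0"
  by (auto simp: beta_def strict_prefix_def dest: prefix_snocD prefix_order.less_imp_le)

lemma beta_strict:
  "strict_prefix (node i) w \<Longrightarrow> beta i w = 1 - int a * (if prefix (node i @ [label i]) w then 1 else 0)"
  by (simp add: beta_def)

lemma beta_node: "beta i (node i) = 0"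
  by (auto simp: beta_def dest: prefix_length_le)

text \<open>Below \<open>v = node i\<close>, \<open>\<beta>\<close> is constant along each child, except that at v itself the
  children's values \<open>1 - a[x = label i]\<close> sum to zero.\<close>

lemma beta_children:
  assumes i: "i \<in> I" "fst i \<noteq> n" and pre: "prefix (node i) w"
  shows "(\<Sum>x<a. beta i (w @ [x])) = (if w = node i then 0 else int a * beta i w)"
proof (cases "w = node i")
  case True
  note nl = node_label[OF i]
  let ?g = "\<lambda>x. 1 - int a * (if x = label i then 1 else 0)"
  have "(\<Sum>x<a. beta i (w @ [x])) = (\<Sum>x<a. ?g x)"
    using True by (intro sum.cong) (auto simp: beta_snoc dest: prefix_length_le)
  also have "\<dots> = ?g (label i) + (\<Sum>x\<in>{..<a} - {label i}. 1)"
    using nl(5) by (simp add: sum.remove)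
  also have "\<dots> = 0" using nl(5) a2 by (simp add: of_nat_diff)
  finally show ?thesis using True by simp
next
  case False
  then have "strict_prefix (node i) w" using pre by (simp add: strict_prefix_def)
  then have "beta i (w @ [x]) = beta i w" for x
    using False pre by (simp add: beta_snoc beta_strict)
  then show ?thesis using False by simp
qed

lemma beta_parent:
  assumes "strict_prefix (node i) w" "butlast w \<noteq> node i"
  shows "beta i (butlast w) = beta i w"
proof -
  obtain b x where w: "w = b @ [x]"
    using assms(1) by (cases w rule: rev_cases) auto
  then have "strict_prefix (node i) b"
    using assms by (auto simp: strict_prefix_def)
  then show ?thesis
    using w by (simp add: beta_snoc beta_strict strict_prefix_def)
qed

lemma dvd_laplace_root:
  assumes w: "w \<in> W" and i: "fst i = n"
  shows "Q n dvd pair (phi i) (\<lambda>y. adj w y - int d * e (Some w) y)"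
proof -
  define m where "m = n - 2 - length w"
  have "pair (phi i) (\<lambda>y. adj w y - int d * e (Some w) y)
      = (if w = [] then 0 else - int a * Q (Suc (Suc m))) - int a * int a * Q m
        + int d * int a * Q (Suc m)"
    unfolding pair_laplace[OF w] m_def[symmetric] using i by (simp add: coef_def int_a algebra_simps)
  also have "\<dots> = (if w = [] then int a * Q (Suc (Suc m)) else 0)"
    unfolding Q_rec int_a by (simp add: algebra_simps)
  also have "Q n dvd \<dots>"
  proof -
    have "Suc (Suc (n - 2)) = n" using n2 by simp
    then show ?thesis by (simp add: m_def)
  qed
  finally show ?thesis .
qed

text \<open>Strictly below \<open>v = node i\<close>, the row value vanishes except at the children of v,
  where it is \<open>-\<beta> q_k\<close> with \<open>k = fst i\<close>.\<close>

lemma dvd_laplace_below: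
  assumes i: "i \<in> I" "fst i \<noteq> n" and sp: "strict_prefix (node i) w"
  defines "m \<equiv> n - 2 - length w"
  shows "Q (fst i) dvd beta i (butlast w) * Q (Suc (Suc m))
                       + (\<Sum>x<a. beta i (w @ [x])) * Q m - int d * beta i w * Q (Suc m)"
    (is "_ dvd ?N")
proof -
  have "w \<noteq> []" using sp by auto
  have "prefix (node i) w" "w \<noteq> node i" using sp by (auto simp: strict_prefix_def)
  then have sum: "(\<Sum>x<a. beta i (w @ [x])) = int a * beta i w"
    using beta_children[OF i] by simp
  show ?thesis
  proof (cases "butlast w = node i")
    case True
    then have "?N = - beta i w * Q (Suc (Suc m))"
      using sum by (simp add: beta_node Q_rec algebra_simps)
    moreover have "length w = Suc (length (node i))"
      using True \<open>w \<noteq> []\<close> by (cases w rule: rev_cases) auto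
    then have "Suc (Suc m) = fst i"
      using node_label(1)[OF i] index_nonroot[OF i] by (simp add: m_def)
    ultimately show ?thesis by simp
  next
    case False
    then have "?N = 0"
      using sum beta_parent[OF sp] by (simp add: Q_rec algebra_simps)
    then show ?thesis by simp
  qed
qed

lemma dvd_laplace_nonroot:
  assumes i: "i \<in> I" "fst i \<noteq> n" and w: "w \<in> W"
  shows "Q (fst i) dvd pair (phi i) (\<lambda>y. adj w y - int d * e (Some w) y)"
proof -
  define m where "m = n - 2 - length w"
  let ?N = "(if w = [] then 0 else beta i (butlast w) * Q (Suc (Suc m)))
            + (\<Sum>x<a. beta i (w @ [x])) * Q m - int d * beta i w * Q (Suc m)"
  have N: "pair (phi i) (\<lambda>y. adj w y - int d * e (Some w) y) = ?N"
    unfolding pair_laplace[OF w] m_def[symmetric] using i by (simp add: coef_def)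
  consider "\<not> prefix (node i) w" | "w = node i" | "strict_prefix (node i) w"
    by (auto simp: strict_prefix_def)
  then have "Q (fst i) dvd ?N"
  proof cases
    case 1
    moreover have "w \<noteq> [] \<Longrightarrow> \<not> prefix (node i) (butlast w)"
      using 1 by (metis prefix_order.order_trans prefixeq_butlast)
    moreover have "beta i (w @ [x]) = 0" for x
      using 1 by (auto simp: beta_snoc dest: append_prefixD)
    ultimately show ?thesis
      by (simp add: beta_not_prefix)
  next
    case 2
    moreover have "\<not> prefix (node i) (butlast w)" if "w \<noteq> []"
      using 2 that prefix_length_le[of "node i" "butlast w"] by (cases "node i") auto
    ultimately show ?thesis
      using beta_children[OF i] by (simp add: beta_node beta_not_prefix)
  next
    case 3
    then show ?thesis
      using dvd_laplace_below[OF i 3] by (auto simp: m_def)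
  qed
  then show ?thesis using N by simp
qed

lemma gens_dvd:
  assumes i: "i \<in> I" and g: "g \<in> gens"
  shows "Q (fst i) dvd pair (phi i) g"
proof -
  have row: "Q (fst i) dvd pair (phi i) (laplace_vec V em (Some w))" if w: "w \<in> W" for w
  proof -
    have "pair (phi i) (laplace_vec V em (Some w)) = pair (phi i) (\<lambda>y. adj w y - int d * e (Some w) y)"
      by (rule pair_cong) (simp add: laplace_Some[OF w])
    then show ?thesis
      using dvd_laplace_root[OF w] dvd_laplace_nonroot[OF i _ w] root_index[OF i] by (cases "fst i = n") auto
  qed
  consider "g = indicator_vec V None" | "g = laplace_vec V em None"
    | w where "w \<in> W" "g = laplace_vec V em (Some w)"
    using g by (auto simp: gens_def V_eq)
  then show ?thesis
  proof cases
    case 1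
    then have "pair (phi i) g = pair (phi i) (e None)"
      by (intro pair_cong) (simp add: indicator_vec_def e_def)
    then show ?thesis by (simp add: pair_e[OF None_in_V] phi_def)
  next
    case 2
    then have "pair (phi i) g = pair (phi i) (\<lambda>y. - (\<Sum>x\<in>Some ` W. laplace_vec V em x y))"
      by (intro pair_cong) (simp add: laplace_None)
    also have "\<dots> = - (\<Sum>w\<in>W. pair (phi i) (laplace_vec V em (Some w)))"
      using pair_smult[of "phi i" "-1"] by (simp add: pair_sum sum.reindex)
    also have "Q (fst i) dvd \<dots>"
      using row by (simp add: dvd_sum)
    finally show ?thesis .
  next
    case 3
    then show ?thesis using row by simp
  qed
qed

lemma pair_h_root: "fst j = n \<Longrightarrow> pair (phi i) (h j) = coef i [] * Q (n - 1)"
  using pair_e[of "Some []"] by (simp add: h_def phi_def V_eq W_def)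

lemma pair_h_nonroot:
  assumes j: "j \<in> I" "fst j \<noteq> n"
  shows "pair (phi i) (h j)
       = Q (fst j - 1) * (coef i (node j @ [label j]) - coef i (node j @ [0]))"
proof -
  note nl = node_label[OF j]
  have children: "Some (node j @ [x]) \<in> V" if "x < a" for x
    using child_in_W[OF nl(3) nl(2) that] by (simp add: V_eq)
  have "n - 1 - length (node j @ [x]) = fst j - 1" for x
    using nl(1) index_nonroot[OF j] by simp
  then show ?thesis
    using j children[OF nl(5)] children[of 0] a2
    by (simp add: h_def pair_diff pair_e phi_def algebra_simps)
qed

lemma dual_nonroot:
  assumes i: "i \<in> I" "fst i \<noteq> n" and j: "j \<in> I" "fst j \<noteq> n"
  shows "Q (fst i) dvd pair (phi i) (h j) - (if i = j then 1 else 0)"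
proof -
  have "beta i (node j @ [label j]) - beta i (node j @ [0])
      = - int a * (if node i = node j \<and> label i = label j then 1 else 0)"
    using node_label(4)[OF i] by (simp add: beta_snoc)
  then have pij: "pair (phi i) (h j)
      = - int a * Q (fst j - 1) * (if node i = node j \<and> label i = label j then 1 else 0)"
    using pair_h_nonroot[OF j, of i] i by (simp add: coef_def)
  show ?thesis
  proof (cases "node i = node j \<and> label i = label j")
    case True
    then have "i = j" using node_label_inj[OF i j] by simp
    have "Q (fst i) = 1 + int a * Q (fst i - 1)"
      using Q_Suc[of "fst i - 1"] index_nonroot(1)[OF i] by simp
    then have "pair (phi i) (h j) - 1 = - Q (fst i)"
      using pij True \<open>i = j\<close> by simp
    then show ?thesis using \<open>i = j\<close> by simp
  next
    case False
    then show ?thesis using pij by auto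
  qed
qed

lemma dual:
  assumes i: "i \<in> I" and j: "j \<in> I"
  shows "Q (fst i) dvd pair (phi i) (h j) - (if i = j then 1 else 0)"
proof (cases "fst j = n")
  case j_root: True
  show ?thesis
  proof (cases "fst i = n")
    case True
    then have "i = j" using root_index[OF i] root_index[OF j j_root] by simp
    have "Q n = 1 + int a * Q (n - 1)"
      using Q_Suc[of "n - 1"] n2 by simp
    then have "pair (phi i) (h j) - 1 = - Q n"
      using True pair_h_root[OF j_root] by (simp add: coef_def)
    then show ?thesis using \<open>i = j\<close> True by simp
  next
    case False
    then show ?thesis
      using j_root pair_h_root[OF j_root] by (auto simp: coef_def beta_def)
  qed
next
  case j_nonroot: False
  show ?thesis
  proof (cases "fst i = n")
    case True
    then show ?thesis using j_nonroot pair_h_nonroot[OF j j_nonroot, of i] by (auto simp: coef_def)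
  next
    case False
    then show ?thesis by (rule dual_nonroot[OF i _ j j_nonroot])
  qed
qed

sublocale cyclic_decomposition V gens I "\<lambda>i. qsum a (fst i)" h phi
proof unfold_locales
  show "finite I" by (rule finite_I)
  show "0 < qsum a (fst i)" if "i \<in> I" for i
    using Q_pos[OF index_fst_pos[OF that]] by (simp add: Q_def)
  show "inL (\<lambda>y. int (qsum a (fst i)) * h i y)" if "i \<in> I" for i
    using torsion[OF that] by (simp add: Q_def)
  show "spanned (e u)" if "u \<in> V" for u
    by (rule spanning[OF that])
  show "int (qsum a (fst i)) dvd pair (phi i) g" if "i \<in> I" "g \<in> gens" for i g
    using gens_dvd[OF that] by (simp add: Q_def)
  show "int (qsum a (fst i)) dvd pair (phi i) (h j) - (if i = j then 1 else 0)"
    if "i \<in> I" "j \<in> I" for i j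
    using dual[OF that] by (simp add: Q_def)
qed

theorem SP_T_iso: "SP_T d n \<cong> target_group a n"
proof -
  have "SP_T d n = Z Mod L"
    by (simp add: SP_T_def sandpile_group_def sandpile_lattice_eq)
  moreover have "target_group a n = G"
    by (simp add: target_group_def case_prod_beta')
  ultimately show ?thesis using quotient_iso by simp
qed

end

theorem mainTheorem7:
  fixes d n :: nat
  assumes "d \<ge> 3" and "n \<ge> 2"
  shows "SP_T d n \<cong> target_group (d - 1) n"
proof -
  interpret tree d n using assms by unfold_locales
  show ?thesis by (rule SP_T_iso)
qed

end
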